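(* Let $A$ be a unital Banach algebra. The following are equivalent: (i) $A$ admits a character (a nonzero multiplicative linear functional $A\to\mathbb{C}$); (ii) there exists a nonzero Banach space that is a left function module over $A$; (iii) every (nonzero) Banach space $X$ admits a left $A$-module action making it a left function module over $A$. Moreover, for any character $\varphi$ of $A$ and any Banach space $X$, the action $a\cdot x=\varphi(a)x$ makes $X$ a left function module over $A$.
   Context: A left Banach $A$-module action satisfies $1\cdot x=x$ and $\|a\cdot x\|\le\|a\|\|x\|$; $X$ is a left function module over $A$ if there exist a compact Hausdorff space $K$, a linear isometry $i\colon X\to C(K)$ and a contractive unital homomorphism $\theta\colon A\to C(K)$ with $i(a\cdot x)=\theta(a)i(x)$ for all $a,x$. *)

theory Defs
  imports "HOL-Analysis.Analysis"
begin

text \<open>The distribution has no complex vector space class, so we add one: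
  a real normed vector space with a compatible complex scalar multiplication.\<close>

class complex_vector_sp = real_vector +
  fixes scaleC :: "complex \<Rightarrow> 'a \<Rightarrow> 'a" (infixr \<open>*\<^sub>C\<close> 75)
  assumes scaleC_add_right: "c *\<^sub>C (x + y) = c *\<^sub>C x + c *\<^sub>C y"
    and scaleC_add_left: "(c + d) *\<^sub>C x = c *\<^sub>C x + d *\<^sub>C x"
    and scaleC_scaleC: "c *\<^sub>C (d *\<^sub>C x) = (c * d) *\<^sub>C x"
    and scaleC_one: "1 *\<^sub>C x = x"
    and scaleR_scaleC: "r *\<^sub>R x = complex_of_real r *\<^sub>C x"

class complex_normed_vector_sp = complex_vector_sp + real_normed_vector +
  assumes norm_scaleC: "norm (c *\<^sub>C x) = cmod c * norm x"

class complex_banach_sp = complex_normed_vector_sp + complete_space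

class complex_banach_algebra_1 = complex_banach_sp + real_normed_algebra_1 +
  assumes scaleC_mult_left: "c *\<^sub>C (a * b) = (c *\<^sub>C a) * b"
    and scaleC_mult_right: "c *\<^sub>C (a * b) = a * (c *\<^sub>C b)"

instantiation complex :: complex_banach_sp
begin
definition scaleC_complex :: "complex \<Rightarrow> complex \<Rightarrow> complex" where
  "scaleC_complex c z = c * z"
instance
  by standard (auto simp: scaleC_complex_def algebra_simps norm_mult scaleR_conv_of_real)
end

definition is_character :: "('a::complex_banach_algebra_1 \<Rightarrow> complex) \<Rightarrow> bool" where
  "is_character \<phi> \<longleftrightarrow>
     (\<forall>a b. \<phi> (a + b) = \<phi> a + \<phi> b) \<and>
     (\<forall>c a. \<phi> (c *\<^sub>C a) = c * \<phi> a) \<and>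
     (\<forall>a b. \<phi> (a * b) = \<phi> a * \<phi> b) \<and>
     (\<exists>a. \<phi> a \<noteq> 0)"

definition left_banach_module_action ::
    "('a::complex_banach_algebra_1 \<Rightarrow> 'x::complex_banach_sp \<Rightarrow> 'x) \<Rightarrow> bool" where
  "left_banach_module_action act \<longleftrightarrow>
     (\<forall>a b x. act (a + b) x = act a x + act b x) \<and>
     (\<forall>c a x. act (c *\<^sub>C a) x = c *\<^sub>C act a x) \<and>
     (\<forall>a x y. act a (x + y) = act a x + act a y) \<and>
     (\<forall>a c x. act a (c *\<^sub>C x) = c *\<^sub>C act a x) \<and>
     (\<forall>a b x. act (a * b) x = act a (act b x)) \<and>
     (\<forall>x. act 1 x = x) \<and>
     (\<forall>a x. norm (act a x) \<le> norm a * norm x)"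

text \<open>Supremum norm on C(K), K a compact space given as a topology on a type.
  (For K empty, C(K) = {0} and the norm is 0.)\<close>
definition supnorm :: "'k topology \<Rightarrow> ('k \<Rightarrow> complex) \<Rightarrow> real" where
  "supnorm K f = (if topspace K = {} then 0 else (SUP k\<in>topspace K. cmod (f k)))"

text \<open>X (with the action act) is a left function module over A, witnessed by a
  compact Hausdorff space K whose points live in the type 'k. Elements of C(K)
  are the continuous maps K \<rightarrow> \<complex>, identified when they agree on topspace K.
  i is a linear isometry X \<rightarrow> C(K), \<theta> a contractive unital homomorphism
  A \<rightarrow> C(K), and i(a\<cdot>x) = \<theta>(a) i(x).\<close>
definition left_function_module ::
    "'k itself \<Rightarrow> ('a::complex_banach_algebra_1 \<Rightarrow> 'x::complex_banach_sp \<Rightarrow> 'x) \<Rightarrow> bool" where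
  "left_function_module _ act \<longleftrightarrow>
     left_banach_module_action act \<and>
     (\<exists>(K::'k topology) (i::'x \<Rightarrow> 'k \<Rightarrow> complex) (\<theta>::'a \<Rightarrow> 'k \<Rightarrow> complex).
        compact_space K \<and> Hausdorff_space K \<and>
        (\<forall>x. continuous_map K euclidean (i x)) \<and>
        (\<forall>x y. \<forall>k\<in>topspace K. i (x + y) k = i x k + i y k) \<and>
        (\<forall>c x. \<forall>k\<in>topspace K. i (c *\<^sub>C x) k = c * i x k) \<and>
        (\<forall>x. supnorm K (i x) = norm x) \<and>
        (\<forall>a. continuous_map K euclidean (\<theta> a)) \<and>
        (\<forall>a b. \<forall>k\<in>topspace K. \<theta> (a + b) k = \<theta> a k + \<theta> b k) \<and>
        (\<forall>c a. \<forall>k\<in>topspace K. \<theta> (c *\<^sub>C a) k = c * \<theta> a k) \<and>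
        (\<forall>a b. \<forall>k\<in>topspace K. \<theta> (a * b) k = \<theta> a k * \<theta> b k) \<and>
        (\<forall>k\<in>topspace K. \<theta> 1 k = 1) \<and>
        (\<forall>a. supnorm K (\<theta> a) \<le> norm a) \<and>
        (\<forall>a x. \<forall>k\<in>topspace K. i (act a x) k = \<theta> a k * i x k))"

end

theory Submission
  imports Defs
begin

text \<open>If \<phi> is a character, letting a act on X by the scalar \<phi>(a) realises X as a function
  module: embed X isometrically into C(K), K the weak* compact unit ball of the dual, by
  evaluation (Hahn--Banach supplies norming functionals), and send a to the constant function
  \<phi>(a); contractivity of \<theta> is the automatic bound |\<phi>(a)| \<le> \<parallel>a\<parallel>. Conversely, if a nonzero X is a
  function module via \<theta> : A \<rightarrow> C(K), then K is nonempty and evaluation of \<theta> at any point of K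
  is a character.\<close>

section \<open>Hahn--Banach\<close>

definition sublinear :: "('x::real_vector \<Rightarrow> real) \<Rightarrow> bool" where
  "sublinear p \<longleftrightarrow>
     (\<forall>x y. p (x + y) \<le> p x + p y) \<and> (\<forall>t x. 0 \<le> t \<longrightarrow> p (t *\<^sub>R x) = t * p x)"

lemma sublinear_zero: "sublinear p \<Longrightarrow> p 0 = 0"
  unfolding sublinear_def by (metis order_refl scaleR_zero_left mult_zero_left)

lemma sublinear_norm: "sublinear norm"
  by (simp add: sublinear_def norm_triangle_ineq)

text \<open>Partial linear functionals are handled through their graphs, so that Zorn's lemma
  applies to the subset order.\<close>

definition linear_graph :: "('x::real_vector \<times> real) set \<Rightarrow> bool" where
  "linear_graph G \<longleftrightarrow> (0, 0) \<in> G \<and>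
     (\<forall>x a y b. (x, a) \<in> G \<longrightarrow> (y, b) \<in> G \<longrightarrow> (x + y, a + b) \<in> G) \<and>
     (\<forall>x a c. (x, a) \<in> G \<longrightarrow> (c *\<^sub>R x, c * a) \<in> G)"

lemma linear_graph_zero: "linear_graph G \<Longrightarrow> (0, 0) \<in> G"
  by (simp add: linear_graph_def)

lemma linear_graph_add: "linear_graph G \<Longrightarrow> (x, a) \<in> G \<Longrightarrow> (y, b) \<in> G \<Longrightarrow> (x + y, a + b) \<in> G"
  by (simp add: linear_graph_def)

lemma linear_graph_scaleR: "linear_graph G \<Longrightarrow> (x, a) \<in> G \<Longrightarrow> (c *\<^sub>R x, c * a) \<in> G"
  by (simp add: linear_graph_def)

lemma linear_graph_unique:
  assumes p: "sublinear p" and G: "linear_graph G" "\<forall>(x, a)\<in>G. a \<le> p x"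
    and "(x, a) \<in> G" "(x, b) \<in> G"
  shows "a = b"
proof -
  have "a - b \<le> 0" if "(x, a) \<in> G" "(x, b) \<in> G" for a b
  proof -
    have "(x + (-1) *\<^sub>R x, a + (-1) * b) \<in> G"
      using G(1) that by (intro linear_graph_add linear_graph_scaleR)
    with G(2) sublinear_zero[OF p] show ?thesis by auto
  qed
  with assms(4,5) have "a - b \<le> 0" "b - a \<le> 0" by blast+
  then show ?thesis by simp
qed

lemma linear_graph_chain_Union:
  assumes "chain\<^sub>\<subseteq> C" "C \<noteq> {}" "\<forall>G\<in>C. linear_graph G"
  shows "linear_graph (\<Union>C)"
  unfolding linear_graph_def
proof (intro conjI allI impI)
  show "(0, 0) \<in> \<Union>C"
    using assms(2,3) linear_graph_zero by blast
next
  fix x a y b assume "(x, a) \<in> \<Union>C" "(y, b) \<in> \<Union>C"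
  then obtain H where "H \<in> C" "(x, a) \<in> H" "(y, b) \<in> H"
    using assms(1) unfolding chain_subset_def by blast
  with assms(3) show "(x + y, a + b) \<in> \<Union>C"
    using linear_graph_add by blast
next
  fix x a c assume "(x, a) \<in> \<Union>C"
  with assms(3) show "(c *\<^sub>R x, c * a) \<in> \<Union>C"
    using linear_graph_scaleR by blast
qed

definition graph_extend :: "('x::real_vector \<times> real) set \<Rightarrow> 'x \<Rightarrow> real \<Rightarrow> ('x \<times> real) set" where
  "graph_extend G y c = {(x + t *\<^sub>R y, a + t * c) | x a t. (x, a) \<in> G}"

lemma subset_graph_extend: "G \<subseteq> graph_extend G y c"
  unfolding graph_extend_def by force

lemma in_graph_extend: "(0, 0) \<in> G \<Longrightarrow> (y, c) \<in> graph_extend G y c"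
  unfolding graph_extend_def by force

lemma linear_graph_graph_extend:
  assumes G: "linear_graph G"
  shows "linear_graph (graph_extend G y c)"
  unfolding linear_graph_def
proof (intro conjI allI impI)
  show "(0, 0) \<in> graph_extend G y c"
    using linear_graph_zero[OF G] subset_graph_extend by blast
next
  fix x a x' a' assume "(x, a) \<in> graph_extend G y c" "(x', a') \<in> graph_extend G y c"
  then obtain u b t u' b' t' where "(u, b) \<in> G" "(u', b') \<in> G"
    and "x = u + t *\<^sub>R y" "a = b + t * c" "x' = u' + t' *\<^sub>R y" "a' = b' + t' * c"
    unfolding graph_extend_def by blast
  moreover have "(u + u', b + b') \<in> G"
    using G \<open>(u, b) \<in> G\<close> \<open>(u', b') \<in> G\<close> by (rule linear_graph_add)
  ultimately show "(x + x', a + a') \<in> graph_extend G y c"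
    unfolding graph_extend_def
    by (intro CollectI exI[of _ "u + u'"] exI[of _ "b + b'"] exI[of _ "t + t'"])
       (simp add: algebra_simps)
next
  fix x a d assume "(x, a) \<in> graph_extend G y c"
  then obtain u b t where "(u, b) \<in> G" "x = u + t *\<^sub>R y" "a = b + t * c"
    unfolding graph_extend_def by blast
  moreover have "(d *\<^sub>R u, d * b) \<in> G"
    using G \<open>(u, b) \<in> G\<close> by (rule linear_graph_scaleR)
  ultimately show "(d *\<^sub>R x, d * a) \<in> graph_extend G y c"
    unfolding graph_extend_def
    by (intro CollectI exI[of _ "d *\<^sub>R u"] exI[of _ "d * b"] exI[of _ "d * t"])
       (simp add: algebra_simps)
qed

lemma sublinear_extension_bounds:
  assumes p: "sublinear p" and G: "linear_graph G" "\<forall>(x, a)\<in>G. a \<le> p x"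
  obtains c where "\<And>x a. (x, a) \<in> G \<Longrightarrow> a - p (x - y) \<le> c"
    and "\<And>z b. (z, b) \<in> G \<Longrightarrow> c \<le> p (z + y) - b"
proof -
  have bound: "a - p (x - y) \<le> p (z + y) - b" if "(x, a) \<in> G" "(z, b) \<in> G" for x a z b
  proof -
    have "a + b \<le> p (x + z)"
      using G linear_graph_add[OF G(1) that] by fast
    also have "\<dots> = p ((x - y) + (z + y))"
      by simp
    also have "\<dots> \<le> p (x - y) + p (z + y)"
      using p unfolding sublinear_def by blast
    finally show ?thesis by simp
  qed
  define S where "S = {a - p (x - y) | x a. (x, a) \<in> G}"
  have "S \<noteq> {}"
    using linear_graph_zero[OF G(1)] unfolding S_def by blast
  moreover have "bdd_above S"
    using bound[OF _ linear_graph_zero[OF G(1)]] unfolding S_def bdd_above_def by auto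
  ultimately show thesis
    using bound by (intro that[of "Sup S"] cSup_upper cSup_least) (auto simp: S_def)
qed

lemma dominated_graph_extend:
  assumes p: "sublinear p" and G: "linear_graph G" "\<forall>(x, a)\<in>G. a \<le> p x"
    and lower: "\<And>x a. (x, a) \<in> G \<Longrightarrow> a - p (x - y) \<le> c"
    and upper: "\<And>z b. (z, b) \<in> G \<Longrightarrow> c \<le> p (z + y) - b"
  shows "\<forall>(x, a)\<in>graph_extend G y c. a \<le> p x"
proof (clarsimp simp: graph_extend_def)
  fix u b and t :: real assume ub: "(u, b) \<in> G"
  have hom: "p (s *\<^sub>R v) = s * p v" if "0 \<le> s" for s v
    using p that unfolding sublinear_def by blast
  \<comment> \<open>scaling by 1/|t| reduces the claim to the upper (t > 0) or lower (t < 0) bound on c\<close>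
  consider "t = 0" | "t > 0" | "t < 0" by linarith
  then show "b + t * c \<le> p (u + t *\<^sub>R y)"
  proof cases
    case 1
    with G(2) ub show ?thesis by auto
  next
    case 2
    have "(inverse t *\<^sub>R u, inverse t * b) \<in> G"
      using G(1) ub by (rule linear_graph_scaleR)
    then have "t * c \<le> t * (p (inverse t *\<^sub>R u + y) - inverse t * b)"
      using 2 upper by (simp add: mult_left_mono)
    also have "\<dots> = t * p (inverse t *\<^sub>R u + y) - b"
      using 2 by (simp add: right_diff_distrib)
    also have "t * p (inverse t *\<^sub>R u + y) = p (t *\<^sub>R (inverse t *\<^sub>R u + y))"
      using 2 by (simp add: hom)
    also have "t *\<^sub>R (inverse t *\<^sub>R u + y) = u + t *\<^sub>R y"
      using 2 by (simp add: scaleR_add_right)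
    finally show ?thesis by simp
  next
    case 3
    define s where "s = - t"
    have s: "0 < s"
      using 3 by (simp add: s_def)
    have "(inverse s *\<^sub>R u, inverse s * b) \<in> G"
      using G(1) ub by (rule linear_graph_scaleR)
    then have "inverse s * b - p (inverse s *\<^sub>R u - y) \<le> c"
      by (rule lower)
    then have "s * (inverse s * b - p (inverse s *\<^sub>R u - y)) \<le> s * c"
      using s by (simp add: mult_left_mono)
    then have "b - s * p (inverse s *\<^sub>R u - y) \<le> s * c"
      using s by (simp add: right_diff_distrib mult.assoc[symmetric])
    moreover have "s * p (inverse s *\<^sub>R u - y) = p (s *\<^sub>R (inverse s *\<^sub>R u - y))"
      using s by (simp add: hom)
    moreover have "s *\<^sub>R (inverse s *\<^sub>R u - y) = u + t *\<^sub>R y"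
      using s by (simp add: scaleR_diff_right s_def)
    ultimately show ?thesis
      by (simp add: s_def)
  qed
qed

lemma maximal_dominated_linear_graph_total:
  assumes p: "sublinear p" and M: "linear_graph M" "\<forall>(x, a)\<in>M. a \<le> p x"
    and max: "\<And>H. linear_graph H \<Longrightarrow> \<forall>(x, a)\<in>H. a \<le> p x \<Longrightarrow> M \<subseteq> H \<Longrightarrow> H = M"
  shows "\<exists>a. (y, a) \<in> M"
proof -
  obtain c where "\<And>x a. (x, a) \<in> M \<Longrightarrow> a - p (x - y) \<le> c"
    and "\<And>z b. (z, b) \<in> M \<Longrightarrow> c \<le> p (z + y) - b"
    using sublinear_extension_bounds[OF p M] by blast
  then have "\<forall>(x, a)\<in>graph_extend M y c. a \<le> p x"
    by (rule dominated_graph_extend[OF p M])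
  then have "graph_extend M y c = M"
    using max linear_graph_graph_extend[OF M(1)] subset_graph_extend by blast
  then show ?thesis
    using in_graph_extend[OF linear_graph_zero[OF M(1)]] by blast
qed

lemma linear_graph_functional:
  assumes M: "linear_graph M"
    and unique: "\<And>x a b. (x, a) \<in> M \<Longrightarrow> (x, b) \<in> M \<Longrightarrow> a = b"
    and total: "\<And>y. \<exists>a. (y, a) \<in> M"
  obtains g where "linear g" "\<And>x. (x, g x) \<in> M"
proof
  define g where "g y = (THE a. (y, a) \<in> M)" for y
  show g_M: "(y, g y) \<in> M" for y
  proof -
    have "\<exists>!a. (y, a) \<in> M"
      using total unique by blast
    then show ?thesis
      unfolding g_def by (rule theI')
  qed
  show "linear g"
  proof (rule linearI)
    show "g (x + y) = g x + g y" for x y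
      using unique[OF g_M linear_graph_add[OF M g_M g_M]] .
    show "g (r *\<^sub>R x) = r *\<^sub>R g x" for r x
      using unique[OF g_M linear_graph_scaleR[OF M g_M]] by simp
  qed
qed

theorem hahn_banach:
  assumes p: "sublinear p" and G: "linear_graph G" "\<forall>(x, a)\<in>G. a \<le> p x"
  obtains g where "linear g" "\<And>x. g x \<le> p x" "\<And>x a. (x, a) \<in> G \<Longrightarrow> g x = a"
proof -
  define \<A> where "\<A> = {H. G \<subseteq> H \<and> linear_graph H \<and> (\<forall>(x, a)\<in>H. a \<le> p x)}"
  have "\<forall>\<C>\<in>chains \<A>. \<exists>U\<in>\<A>. \<forall>H\<in>\<C>. H \<subseteq> U"
  proof
    fix \<C> assume \<C>: "\<C> \<in> chains \<A>"
    show "\<exists>U\<in>\<A>. \<forall>H\<in>\<C>. H \<subseteq> U"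
    proof (cases "\<C> = {}")
      case True
      with G show ?thesis by (auto simp: \<A>_def)
    next
      case False
      with \<C> have "\<Union>\<C> \<in> \<A>"
        unfolding \<A>_def chains_def by (auto intro!: linear_graph_chain_Union)
      then show ?thesis by blast
    qed
  qed
  from Zorn_Lemma2[OF this] obtain M
    where "M \<in> \<A>" and max: "\<And>H. H \<in> \<A> \<Longrightarrow> M \<subseteq> H \<Longrightarrow> H = M"
    by blast
  then have M: "linear_graph M" "\<forall>(x, a)\<in>M. a \<le> p x" and G_M: "G \<subseteq> M"
    by (auto simp: \<A>_def)
  have unique: "a = b" if "(x, a) \<in> M" "(x, b) \<in> M" for x a b
    using linear_graph_unique[OF p M that] .
  have total: "\<exists>a. (y, a) \<in> M" for y
    using G_M max unfolding \<A>_def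
    by (intro maximal_dominated_linear_graph_total[OF p M]) blast
  obtain g where "linear g" and g_M: "\<And>x. (x, g x) \<in> M"
    using linear_graph_functional[OF M(1)] unique total by blast
  moreover have "g x \<le> p x" for x
    using M(2) g_M by blast
  moreover have "g x = a" if "(x, a) \<in> G" for x a
    using G_M that unique[OF g_M] by blast
  ultimately show thesis
    using that by blast
qed

lemma real_norming_functional:
  fixes x0 :: "'x::real_normed_vector"
  obtains g where "linear g" "\<And>x. g x \<le> norm x" "g x0 = norm x0"
proof -
  let ?L = "graph_extend {(0, 0)} x0 (norm x0)"
  have "linear_graph {(0 :: 'x, 0 :: real)}"
    by (simp add: linear_graph_def)
  then have "linear_graph ?L"
    by (rule linear_graph_graph_extend)
  moreover have "\<forall>(x, a)\<in>?L. a \<le> norm x"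
    by (clarsimp simp: graph_extend_def) (metis abs_ge_self mult_right_mono norm_ge_zero)
  ultimately obtain g where "linear g" "\<And>x. g x \<le> norm x" "\<And>x a. (x, a) \<in> ?L \<Longrightarrow> g x = a"
    using hahn_banach[OF sublinear_norm] by blast
  with in_graph_extend[of "{(0, 0)}" x0 "norm x0"] show thesis
    using that by blast
qed

definition complex_linear_functional :: "('x::complex_vector_sp \<Rightarrow> complex) \<Rightarrow> bool" where
  "complex_linear_functional f \<longleftrightarrow>
     (\<forall>x y. f (x + y) = f x + f y) \<and> (\<forall>c x. f (c *\<^sub>C x) = c * f x)"

lemma scaleC_eq_Re_Im: "c *\<^sub>C x = Re c *\<^sub>R x + Im c *\<^sub>R (\<i> *\<^sub>C x)"
  for x :: "'x::complex_vector_sp"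
proof -
  have "c = complex_of_real (Re c) + complex_of_real (Im c) * \<i>"
    by (simp add: complex_eq_iff)
  then have "c *\<^sub>C x = (complex_of_real (Re c) + complex_of_real (Im c) * \<i>) *\<^sub>C x"
    by (rule arg_cong)
  also have "\<dots> = complex_of_real (Re c) *\<^sub>C x + complex_of_real (Im c) *\<^sub>C (\<i> *\<^sub>C x)"
    by (simp add: scaleC_add_left scaleC_scaleC)
  finally show ?thesis
    by (simp add: scaleR_scaleC)
qed

lemma complex_linear_functional_of_Re:
  fixes g :: "'x::complex_vector_sp \<Rightarrow> real"
  assumes g: "linear g"
  shows "complex_linear_functional (\<lambda>x. Complex (g x) (- g (\<i> *\<^sub>C x)))"
  unfolding complex_linear_functional_def
proof (intro conjI allI)
  have g_scaleC: "g (c *\<^sub>C x) = Re c * g x + Im c * g (\<i> *\<^sub>C x)" for c x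
    by (simp add: scaleC_eq_Re_Im[of c x] linear_add[OF g] linear_scale[OF g])
  fix c and x :: 'x
  have "g (\<i> *\<^sub>C (c *\<^sub>C x)) = - Im c * g x + Re c * g (\<i> *\<^sub>C x)"
    by (simp add: scaleC_scaleC g_scaleC[of "\<i> * c"])
  then show "Complex (g (c *\<^sub>C x)) (- g (\<i> *\<^sub>C (c *\<^sub>C x))) = c * Complex (g x) (- g (\<i> *\<^sub>C x))"
    by (simp add: complex_eq_iff g_scaleC[of c x])
next
  fix x y :: 'x
  show "Complex (g (x + y)) (- g (\<i> *\<^sub>C (x + y))) = Complex (g x) (- g (\<i> *\<^sub>C x)) + Complex (g y) (- g (\<i> *\<^sub>C y))"
    by (simp add: complex_eq_iff scaleC_add_right linear_add[OF g])
qed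

lemma complex_functional_norm_le:
  fixes f :: "'x::complex_normed_vector_sp \<Rightarrow> complex"
  assumes f: "complex_linear_functional f" and Re_le: "\<And>x. Re (f x) \<le> norm x"
  shows "cmod (f x) \<le> norm x"
proof (cases "f x = 0")
  case False
  \<comment> \<open>rotate x so that f takes a nonnegative real value at it\<close>
  define u where "u = cnj (sgn (f x))"
  have "u * f x = complex_of_real (cmod (f x))"
    using False unfolding u_def
    by (metis divide_conv_cnj divide_divide_eq_right mult.commute
        nonzero_mult_div_cancel_left norm_sgn sgn_eq)
  then have "cmod (f x) = Re (u * f x)"
    by simp
  also have "u * f x = f (u *\<^sub>C x)"
    using f by (simp add: complex_linear_functional_def)
  also have "Re (f (u *\<^sub>C x)) \<le> norm (u *\<^sub>C x)"
    by (rule Re_le)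
  also have "\<dots> = norm x"
    using False by (simp add: u_def norm_scaleC norm_sgn)
  finally show ?thesis .
qed simp

lemma complex_norming_functional:
  fixes x0 :: "'x::complex_normed_vector_sp"
  obtains f where "complex_linear_functional f" "\<And>x. cmod (f x) \<le> norm x"
    "cmod (f x0) = norm x0"
proof -
  obtain g where g: "linear g" "\<And>x. g x \<le> norm x" "g x0 = norm x0"
    using real_norming_functional by blast
  define f where "f x = Complex (g x) (- g (\<i> *\<^sub>C x))" for x
  have f: "complex_linear_functional f"
    unfolding f_def using g(1) by (rule complex_linear_functional_of_Re)
  have bound: "cmod (f x) \<le> norm x" for x
    by (rule complex_functional_norm_le[OF f]) (simp add: f_def g(2))
  have "norm x0 \<le> cmod (f x0)"
    using complex_Re_le_cmod[of "f x0"] g(3) by (simp add: f_def)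
  with f bound show thesis
    using bound[of x0] that by force
qed

section \<open>The weak* compact dual ball\<close>

definition dual_ball :: "('x::complex_normed_vector_sp \<Rightarrow> complex) set" where
  "dual_ball = {f. complex_linear_functional f \<and> (\<forall>x. cmod (f x) \<le> norm x)}"

definition weak_star_dual_ball :: "('x::complex_normed_vector_sp \<Rightarrow> complex) topology" where
  "weak_star_dual_ball = subtopology (product_topology (\<lambda>_. euclidean) UNIV) dual_ball"

lemma topspace_weak_star_dual_ball [simp]: "topspace weak_star_dual_ball = dual_ball"
  by (simp add: weak_star_dual_ball_def)

lemma continuous_map_evaluation:
  "continuous_map (product_topology (\<lambda>_. euclidean) UNIV) euclidean (\<lambda>f. f x)"
  using continuous_map_product_projection[of x UNIV "\<lambda>_. euclidean"] by simp

lemma continuous_map_weak_star_evaluation: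
  "continuous_map weak_star_dual_ball euclidean (\<lambda>f. f x)"
  unfolding weak_star_dual_ball_def
  by (rule continuous_map_from_subtopology) (rule continuous_map_evaluation)

lemma closedin_dual_ball:
  "closedin (product_topology (\<lambda>_. euclidean) UNIV)
     (dual_ball :: ('x::complex_normed_vector_sp \<Rightarrow> complex) set)"
proof -
  let ?P = "product_topology (\<lambda>_::'x. euclidean :: complex topology) UNIV"
  have eq: "closedin ?P {f. h f = k f}"
    if "continuous_map ?P euclidean h" "continuous_map ?P euclidean k"
    for h k :: "('x \<Rightarrow> complex) \<Rightarrow> complex"
    using closedin_continuous_maps_eq[OF Hausdorff_space_euclidean that] by simp
  have scale: "continuous_map ?P euclidean (\<lambda>f. c * f x)" for c x
    using continuous_map_compose[OF continuous_map_evaluation, of euclidean "\<lambda>z. c * z" x]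
    by (simp add: o_def continuous_intros)
  have bounded: "closedin ?P {f. f x \<in> cball 0 (norm x)}" for x
    using closedin_continuous_map_preimage[OF continuous_map_evaluation closed_cball[unfolded closed_closedin]]
    by (simp del: mem_cball mem_cball_0)
  have additive: "closedin ?P (\<Inter>x. \<Inter>y. {f. f (x + y) = f x + f y})"
    by (intro closedin_INT eq continuous_map_add continuous_map_evaluation) auto
  have homogeneous: "closedin ?P (\<Inter>c. \<Inter>x. {f. f (c *\<^sub>C x) = c * f x})"
    by (intro closedin_INT eq scale continuous_map_evaluation) auto
  have "dual_ball = (\<Inter>x. \<Inter>y. {f. f (x + y) = f x + f y}) \<inter>
      (\<Inter>c. \<Inter>x. {f. f (c *\<^sub>C x) = c * f x}) \<inter> (\<Inter>x. {f. f x \<in> cball 0 (norm x)})"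
    by (auto simp: dual_ball_def complex_linear_functional_def)
  also have "closedin ?P \<dots>"
    by (intro closedin_Int additive homogeneous closedin_INT bounded) simp
  finally show ?thesis .
qed

lemma compact_space_weak_star_dual_ball:
  "compact_space (weak_star_dual_ball :: ('x::complex_normed_vector_sp \<Rightarrow> complex) topology)"
proof -
  let ?P = "product_topology (\<lambda>_::'x. euclidean :: complex topology) UNIV"
  have "compactin ?P (PiE UNIV (\<lambda>x::'x. cball 0 (norm x)))"
    by (simp add: compactin_PiE)
  moreover have "dual_ball \<subseteq> PiE UNIV (\<lambda>x::'x. cball 0 (norm x))"
    by (auto simp: dual_ball_def)
  ultimately have "compactin ?P dual_ball"
    using closedin_dual_ball by (rule closed_compactin)
  then show ?thesis
    unfolding weak_star_dual_ball_def by (rule compact_space_subtopology)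
qed

lemma Hausdorff_space_weak_star_dual_ball: "Hausdorff_space weak_star_dual_ball"
  unfolding weak_star_dual_ball_def
  by (intro Hausdorff_space_subtopology) (simp add: Hausdorff_space_product_topology)

lemma supnorm_weak_star_evaluation:
  "supnorm weak_star_dual_ball (\<lambda>f. f x) = norm x"
proof -
  obtain f0 where "complex_linear_functional f0" "\<And>x. cmod (f0 x) \<le> norm x"
    "cmod (f0 x) = norm x"
    using complex_norming_functional by blast
  then have f0: "f0 \<in> dual_ball" "cmod (f0 x) = norm x"
    unfolding dual_ball_def by blast+
  have "(SUP f\<in>dual_ball. cmod (f x)) = norm x"
  proof (rule cSup_eq_maximum)
    show "norm x \<in> (\<lambda>f. cmod (f x)) ` dual_ball"
      using f0 by force
  qed (auto simp: dual_ball_def)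
  with f0 show ?thesis
    unfolding supnorm_def by auto
qed

section \<open>Characters and function modules\<close>

instance complex_banach_sp \<subseteq> banach ..

lemma one_minus_right_invertible:
  fixes b :: "'a::{real_normed_algebra_1, banach}"
  assumes "norm b < 1"
  obtains s where "(1 - b) * s = 1"
proof
  have summable: "summable (\<lambda>n. b ^ n)"
    by (rule summable_comparison_test[where g = "\<lambda>n. norm b ^ n"])
       (auto intro: norm_power_ineq summable_geometric simp: assms)
  have "b * (\<Sum>n. b ^ n) = (\<Sum>n. b ^ Suc n)"
    using suminf_mult[OF summable, of b] by simp
  also have "\<dots> = (\<Sum>n. b ^ n) - 1"
    using suminf_split_head[OF summable] by simp
  finally show "(1 - b) * (\<Sum>n. b ^ n) = 1"
    by (simp add: left_diff_distrib)
qed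

lemma
  fixes \<phi> :: "'a::complex_banach_algebra_1 \<Rightarrow> complex"
  assumes "is_character \<phi>"
  shows character_add: "\<phi> (a + b) = \<phi> a + \<phi> b"
    and character_scaleC: "\<phi> (c *\<^sub>C a) = c * \<phi> a"
    and character_mult: "\<phi> (a * b) = \<phi> a * \<phi> b"
  using assms by (simp_all add: is_character_def)

lemma character_one:
  fixes \<phi> :: "'a::complex_banach_algebra_1 \<Rightarrow> complex"
  assumes \<phi>: "is_character \<phi>"
  shows "\<phi> 1 = 1"
proof -
  obtain a where "\<phi> a \<noteq> 0"
    using \<phi> by (auto simp: is_character_def)
  moreover have "\<phi> a = \<phi> a * \<phi> 1"
    using character_mult[OF \<phi>, of a 1] by simp
  ultimately show ?thesis by simp
qed

lemma character_norm_le: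
  fixes \<phi> :: "'a::complex_banach_algebra_1 \<Rightarrow> complex"
  assumes \<phi>: "is_character \<phi>"
  shows "cmod (\<phi> a) \<le> norm a"
proof (rule ccontr)
  assume "\<not> cmod (\<phi> a) \<le> norm a"
  then have less: "norm a < cmod (\<phi> a)" and nonzero: "\<phi> a \<noteq> 0"
    by auto
  define b where "b = inverse (\<phi> a) *\<^sub>C a"
  have "\<phi> b = 1"
    using nonzero by (simp add: b_def character_scaleC[OF \<phi>])
  have "norm b = norm a / cmod (\<phi> a)"
    by (simp add: b_def norm_scaleC norm_inverse divide_inverse)
  with less nonzero have "norm b < 1"
    by (simp add: divide_less_eq_1_pos)
  then obtain s where "(1 - b) * s = 1"
    by (rule one_minus_right_invertible)
  then have "\<phi> (1 - b) * \<phi> s = 1"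
    using character_one[OF \<phi>] by (simp flip: character_mult[OF \<phi>])
  moreover have "\<phi> (1 - b) = 0"
    using character_add[OF \<phi>, of "1 - b" b] character_one[OF \<phi>] \<open>\<phi> b = 1\<close> by simp
  ultimately show False
    by simp
qed

lemma character_scalar_module_action:
  fixes \<phi> :: "'a::complex_banach_algebra_1 \<Rightarrow> complex"
  assumes \<phi>: "is_character \<phi>"
  shows "left_banach_module_action (\<lambda>a (x::'x::complex_banach_sp). \<phi> a *\<^sub>C x)"
  unfolding left_banach_module_action_def
proof (intro conjI allI)
  show "norm (\<phi> a *\<^sub>C x) \<le> norm a * norm x" for a and x :: 'x
    using character_norm_le[OF \<phi>] by (simp add: norm_scaleC mult_right_mono)
qed (simp_all add: character_add[OF \<phi>] character_scaleC[OF \<phi>] character_mult[OF \<phi>]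
       character_one[OF \<phi>] scaleC_add_left scaleC_add_right scaleC_scaleC scaleC_one mult.commute)

lemma character_scalar_function_module:
  fixes \<phi> :: "'a::complex_banach_algebra_1 \<Rightarrow> complex"
  assumes \<phi>: "is_character \<phi>"
  shows "left_function_module TYPE('x \<Rightarrow> complex) (\<lambda>a (x::'x::complex_banach_sp). \<phi> a *\<^sub>C x)"
  unfolding left_function_module_def
proof (intro conjI character_scalar_module_action[OF \<phi>] exI)
  let ?K = "weak_star_dual_ball :: ('x \<Rightarrow> complex) topology"
  show "compact_space ?K" "Hausdorff_space ?K"
    by (rule compact_space_weak_star_dual_ball Hausdorff_space_weak_star_dual_ball)+
  show "\<forall>x. continuous_map ?K euclidean (\<lambda>f. f x)"
    using continuous_map_weak_star_evaluation by blast
  show "\<forall>x. supnorm ?K (\<lambda>f. f x) = norm x"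
    using supnorm_weak_star_evaluation by blast
  show "\<forall>a. supnorm ?K (\<lambda>_. \<phi> a) \<le> norm a"
    using character_norm_le[OF \<phi>] by (simp add: supnorm_def)
  show "\<forall>x y. \<forall>f\<in>topspace ?K. f (x + y) = f x + f y"
    "\<forall>c x. \<forall>f\<in>topspace ?K. f (c *\<^sub>C x) = c * f x"
    "\<forall>a x. \<forall>f\<in>topspace ?K. f (\<phi> a *\<^sub>C x) = \<phi> a * f x"
    by (simp_all add: dual_ball_def complex_linear_functional_def)
qed (simp_all add: character_add[OF \<phi>] character_scaleC[OF \<phi>] character_mult[OF \<phi>]
       character_one[OF \<phi>])

lemma character_of_function_module:
  fixes act :: "'a::complex_banach_algebra_1 \<Rightarrow> 'x::complex_banach_sp \<Rightarrow> 'x" and x :: 'x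
  assumes "x \<noteq> 0" and "left_function_module TYPE('k) act"
  shows "\<exists>\<phi>::'a \<Rightarrow> complex. is_character \<phi>"
proof -
  obtain K :: "'k topology" and i :: "'x \<Rightarrow> 'k \<Rightarrow> complex" and \<theta> :: "'a \<Rightarrow> 'k \<Rightarrow> complex"
    where isometry: "\<forall>x. supnorm K (i x) = norm x"
      and add: "\<forall>a b. \<forall>k\<in>topspace K. \<theta> (a + b) k = \<theta> a k + \<theta> b k"
      and scaleC: "\<forall>c a. \<forall>k\<in>topspace K. \<theta> (c *\<^sub>C a) k = c * \<theta> a k"
      and mult: "\<forall>a b. \<forall>k\<in>topspace K. \<theta> (a * b) k = \<theta> a k * \<theta> b k"
      and one: "\<forall>k\<in>topspace K. \<theta> 1 k = 1"
    using assms(2) unfolding left_function_module_def by (elim conjE exE) blast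
  have "topspace K \<noteq> {}"
    using isometry[rule_format, of x] assms(1) by (auto simp: supnorm_def)
  then obtain k where "k \<in> topspace K"
    by blast
  then have "is_character (\<lambda>a. \<theta> a k)"
    using add scaleC mult one unfolding is_character_def by (metis one_neq_zero)
  then show ?thesis
    by blast
qed

theorem mainTheorem6:
  fixes A_type :: "'a::complex_banach_algebra_1 itself"
    and X_type :: "'x::complex_banach_sp itself"
    and K_type :: "'k itself"
  shows
    \<comment> \<open>(ii) \<Longrightarrow> (i): any nonzero Banach space X (any type 'x) that is a left function
        module over A (with K in any type 'k) forces a character\<close>
    "((\<exists>x::'x. x \<noteq> 0) \<and> (\<exists>act::'a \<Rightarrow> 'x \<Rightarrow> 'x. left_function_module TYPE('k) act)
        \<longrightarrow> (\<exists>\<phi>::'a \<Rightarrow> complex. is_character \<phi>))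
     \<and>
     \<comment> \<open>(i) \<Longrightarrow> (ii): some nonzero Banach space (here \<complex> itself) is a function module\<close>
     ((\<exists>\<phi>::'a \<Rightarrow> complex. is_character \<phi>)
        \<longrightarrow> (\<exists>act::'a \<Rightarrow> complex \<Rightarrow> complex. left_function_module TYPE(complex \<Rightarrow> complex) act))
     \<and>
     \<comment> \<open>(i) \<Longrightarrow> (iii): every Banach space X admits a module action making it a function module\<close>
     ((\<exists>\<phi>::'a \<Rightarrow> complex. is_character \<phi>)
        \<longrightarrow> (\<exists>act::'a \<Rightarrow> 'x \<Rightarrow> 'x. left_banach_module_action act
               \<and> left_function_module TYPE('x \<Rightarrow> complex) act))
     \<and>
     \<comment> \<open>Moreover: for every character \<phi> and every Banach space X, a\<cdot>x = \<phi>(a)x works\<close>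
     (\<forall>\<phi>::'a \<Rightarrow> complex. is_character \<phi> \<longrightarrow>
        left_banach_module_action (\<lambda>a (x::'x). \<phi> a *\<^sub>C x)
        \<and> left_function_module TYPE('x \<Rightarrow> complex) (\<lambda>a (x::'x). \<phi> a *\<^sub>C x))"
proof (intro conjI impI allI)
  show "\<exists>\<phi>::'a \<Rightarrow> complex. is_character \<phi>"
    if "(\<exists>x::'x. x \<noteq> 0) \<and> (\<exists>act::'a \<Rightarrow> 'x \<Rightarrow> 'x. left_function_module TYPE('k) act)"
    using that character_of_function_module by blast
next
  assume "\<exists>\<phi>::'a \<Rightarrow> complex. is_character \<phi>"
  then obtain \<phi> :: "'a \<Rightarrow> complex" where \<phi>: "is_character \<phi>"
    by blast
  show "\<exists>act::'a \<Rightarrow> complex \<Rightarrow> complex. left_function_module TYPE(complex \<Rightarrow> complex) act"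
    using character_scalar_function_module[OF \<phi>] by blast
  show "\<exists>act::'a \<Rightarrow> 'x \<Rightarrow> 'x. left_banach_module_action act
      \<and> left_function_module TYPE('x \<Rightarrow> complex) act"
    using character_scalar_module_action[OF \<phi>] character_scalar_function_module[OF \<phi>] by blast
next
  fix \<phi> :: "'a \<Rightarrow> complex"
  assume "is_character \<phi>"
  then show "left_banach_module_action (\<lambda>a (x::'x). \<phi> a *\<^sub>C x)"
    and "left_function_module TYPE('x \<Rightarrow> complex) (\<lambda>a (x::'x). \<phi> a *\<^sub>C x)"
    by (rule character_scalar_module_action character_scalar_function_module)+
qed

end
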